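(* Let $f\in L^2(\Omega)$ and $g\in L^2(|\boldsymbol\beta\cdot\mathbf n|;\Gamma_-)$. Under Assumption A and $|\boldsymbol\beta|>0$ on $\overline\Omega$, the least-squares problem: find $\boldsymbol\sigma\in H_{g,-}(\mathrm{div};\Omega)$ with $\mathcal J_1(\boldsymbol\sigma;f,g)=\inf_{\boldsymbol\tau\in H_{g,-}(\mathrm{div};\Omega)}\mathcal J_1(\boldsymbol\tau;f,g)$, where $$\mathcal J_1(\boldsymbol\tau;f,g)=\big\|\nabla\cdot\boldsymbol\tau+\tilde\gamma(\boldsymbol\beta\cdot\boldsymbol\tau)-f\big\|_0^2+\sum_{i=1}^{d-1}\|\boldsymbol\tau\cdot\boldsymbol\beta_\perp^{(i)}\|_0^2,$$ has a unique solution $\boldsymbol\sigma\in H_{g,-}(\mathrm{div};\Omega)$.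
   Context: Let $\Omega\subset\mathbb R^d$ ($d=2,3$) be a bounded polyhedral domain with Lipschitz boundary, with unit outward normal $\mathbf n$. Let $\gamma\in L^\infty(\Omega)$ and $\boldsymbol\beta\in[C^1(\overline\Omega)]^d$. The inflow boundary is $\Gamma_-=\{x\in\partial\Omega:\boldsymbol\beta(x)\cdot\mathbf n(x)<0\}$. Let $L^2(|\boldsymbol\beta\cdot\mathbf n|;\Gamma_-)$ be the set of measurable $v$ on $\partial\Omega$ with $\int_{\Gamma_-}|\boldsymbol\beta\cdot\mathbf n|v^2<\infty$, and $W=\{v\in L^2(\Omega):\nabla\cdot(\boldsymbol\beta v)\in L^2(\Omega)\}$. Assumption A: for every $f\in L^2(\Omega)$ and $g\in L^2(|\boldsymbol\beta\cdot\mathbf n|;\Gamma_-)$ the problem $\nabla\cdot(\boldsymbol\beta u)+\gamma u=f$ in $\Omega$, $u=g$ on $\Gamma_-$ has a unique solution $u\in W$. Define $H_{g,-}(\mathrm{div};\Omega)=\{\boldsymbol\tau\in H(\mathrm{div};\Omega):\boldsymbol\tau\cdot\mathbf n=(\boldsymbol\beta\cdot\mathbf n)g\text{ on }\Gamma_-\}$ and $H_{0,-}(\mathrm{div};\Omega)$ the case $g=0$. Assume $|\boldsymbol\beta(x)|>0$ for all $x\in\overline\Omega$, put $\tilde\gamma=\gamma/|\boldsymbol\beta|^2$, and let $\boldsymbol\beta_\perp^{(1)},\dots,\boldsymbol\beta_\perp^{(d-1)}$ be measurable vector fields with $\boldsymbol\beta\cdot\boldsymbol\beta_\perp^{(i)}=0$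 and $\boldsymbol\beta_\perp^{(i)}\cdot\boldsymbol\beta_\perp^{(j)}=\delta_{ij}$ pointwise. $\|\cdot\|_0$ denotes the $L^2(\Omega)$ norm. *)

theory Defs
  imports "HOL-Analysis.Analysis"
begin

text \<open>Strong Lipschitz boundary: locally the domain lies below the graph of a
Lipschitz function in some direction e.\<close>
definition lipschitz_boundary :: "('a::euclidean_space) set \<Rightarrow> bool" where
  "lipschitz_boundary \<Omega> \<longleftrightarrow>
     (\<forall>x\<in>frontier \<Omega>. \<exists>e r L (h::'a \<Rightarrow> real).
        norm e = 1 \<and> r > 0 \<and> L-lipschitz_on UNIV h \<and>
        (\<forall>y t. h (y + t *\<^sub>R e) = h y) \<and>
        ball x r \<inter> \<Omega> = {y \<in> ball x r. y \<bullet> e < h y})"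

definition polyhedral_lipschitz_domain :: "('a::euclidean_space) set \<Rightarrow> bool" where
  "polyhedral_lipschitz_domain \<Omega> \<longleftrightarrow>
     open \<Omega> \<and> connected \<Omega> \<and> \<Omega> \<noteq> {} \<and> bounded \<Omega> \<and>
     (\<exists>P. finite P \<and> (\<forall>p\<in>P. polytope p) \<and> closure \<Omega> = \<Union>P) \<and>
     lipschitz_boundary \<Omega>"

definition hausdorff_pre :: "real \<Rightarrow> real \<Rightarrow> ('a::euclidean_space) set \<Rightarrow> ennreal" where
  "hausdorff_pre s \<delta> A =
     (INF C \<in> {C :: nat \<Rightarrow> 'a set. A \<subseteq> \<Union>(range C) \<and>
                 (\<forall>i. bounded (C i) \<and> diameter (C i) \<le> \<delta>)}.
        (\<Sum>i. ennreal (unit_ball_vol s * (diameter (C i) / 2) powr s)))"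

definition hausdorff :: "real \<Rightarrow> ('a::euclidean_space) set \<Rightarrow> ennreal" where
  "hausdorff s A = (SUP \<delta> \<in> {0<..}. hausdorff_pre s \<delta> A)"

definition surf :: "(real ^ 'n) set \<Rightarrow> (real ^ 'n) measure" where
  "surf \<Omega> = measure_of (frontier \<Omega>) {A. A \<subseteq> frontier \<Omega> \<and> A \<in> sets borel}
              (hausdorff (real CARD('n) - 1))"

definition outward_normal :: "('a::euclidean_space) set \<Rightarrow> 'a \<Rightarrow> 'a \<Rightarrow> bool" where
  "outward_normal \<Omega> x n \<longleftrightarrow> norm n = 1 \<and>
     (\<exists>\<epsilon>>0. ball x \<epsilon> \<inter> \<Omega> = {y \<in> ball x \<epsilon>. (y - x) \<bullet> n < 0})"

definition nrm :: "('a::euclidean_space) set \<Rightarrow> 'a \<Rightarrow> 'a" where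
  "nrm \<Omega> x = (SOME n. outward_normal \<Omega> x n)"

definition inflow :: "('a::euclidean_space) set \<Rightarrow> ('a \<Rightarrow> 'a) \<Rightarrow> 'a set" where
  "inflow \<Omega> \<beta> = {x \<in> frontier \<Omega>. \<exists>n. outward_normal \<Omega> x n \<and> \<beta> x \<bullet> n < 0}"

definition L2 :: "'a measure \<Rightarrow> ('a \<Rightarrow> real) \<Rightarrow> bool" where
  "L2 M f \<longleftrightarrow> f \<in> borel_measurable M \<and> integrable M (\<lambda>x. (f x)\<^sup>2)"

definition L2v :: "'a measure \<Rightarrow> ('a \<Rightarrow> 'b::euclidean_space) \<Rightarrow> bool" where
  "L2v M \<tau> \<longleftrightarrow> \<tau> \<in> borel_measurable M \<and> integrable M (\<lambda>x. (norm (\<tau> x))\<^sup>2)"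

definition Linf :: "'a measure \<Rightarrow> ('a \<Rightarrow> real) \<Rightarrow> bool" where
  "Linf M f \<longleftrightarrow> f \<in> borel_measurable M \<and> (\<exists>C. AE x in M. \<bar>f x\<bar> \<le> C)"

definition L2_inflow :: "(real ^ 'n) set \<Rightarrow> (real ^ 'n \<Rightarrow> real ^ 'n) \<Rightarrow> (real ^ 'n \<Rightarrow> real) \<Rightarrow> bool" where
  "L2_inflow \<Omega> \<beta> g \<longleftrightarrow> g \<in> borel_measurable (surf \<Omega>) \<and>
     (\<integral>\<^sup>+ x \<in> inflow \<Omega> \<beta>. ennreal (\<bar>\<beta> x \<bullet> nrm \<Omega> x\<bar> * (g x)\<^sup>2) \<partial>surf \<Omega>) < \<infinity>"

definition C1c :: "('a::euclidean_space \<Rightarrow> real) \<Rightarrow> ('a \<Rightarrow> 'a) \<Rightarrow> bool" where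
  "C1c \<phi> d\<phi> \<longleftrightarrow> (\<forall>x. (\<phi> has_derivative (\<lambda>h. d\<phi> x \<bullet> h)) (at x)) \<and>
     continuous_on UNIV d\<phi> \<and> bounded {x. \<phi> x \<noteq> 0}"

definition has_weak_div :: "('a::euclidean_space) set \<Rightarrow> ('a \<Rightarrow> 'a) \<Rightarrow> ('a \<Rightarrow> real) \<Rightarrow> bool" where
  "has_weak_div \<Omega> \<tau> w \<longleftrightarrow>
     (\<forall>\<phi> d\<phi>. C1c \<phi> d\<phi> \<and> closure {x. \<phi> x \<noteq> 0} \<subseteq> \<Omega> \<longrightarrow>
        (\<integral>x. \<tau> x \<bullet> d\<phi> x \<partial>lebesgue_on \<Omega>) = - (\<integral>x. w x * \<phi> x \<partial>lebesgue_on \<Omega>))"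

definition Hdiv :: "('a::euclidean_space) set \<Rightarrow> ('a \<Rightarrow> 'a) \<Rightarrow> bool" where
  "Hdiv \<Omega> \<tau> \<longleftrightarrow> L2v (lebesgue_on \<Omega>) \<tau> \<and> (\<exists>w. L2 (lebesgue_on \<Omega>) w \<and> has_weak_div \<Omega> \<tau> w)"

definition wdiv :: "('a::euclidean_space) set \<Rightarrow> ('a \<Rightarrow> 'a) \<Rightarrow> 'a \<Rightarrow> real" where
  "wdiv \<Omega> \<tau> = (SOME w. L2 (lebesgue_on \<Omega>) w \<and> has_weak_div \<Omega> \<tau> w)"

text \<open>Weak (Green's formula) meaning of tau.n = (beta.n) g on Gamma_-.\<close>
definition ntrace_inflow :: "(real ^ 'n) set \<Rightarrow> (real ^ 'n \<Rightarrow> real ^ 'n) \<Rightarrow> (real ^ 'n \<Rightarrow> real)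
    \<Rightarrow> (real ^ 'n \<Rightarrow> real ^ 'n) \<Rightarrow> bool" where
  "ntrace_inflow \<Omega> \<beta> g \<tau> \<longleftrightarrow>
     (\<forall>\<phi> d\<phi>. C1c \<phi> d\<phi> \<and> (\<forall>x \<in> frontier \<Omega> - inflow \<Omega> \<beta>. \<phi> x = 0) \<longrightarrow>
        (\<integral>x. wdiv \<Omega> \<tau> x * \<phi> x + \<tau> x \<bullet> d\<phi> x \<partial>lebesgue_on \<Omega>) =
        (\<integral>x. indicator (inflow \<Omega> \<beta>) x * ((\<beta> x \<bullet> nrm \<Omega> x) * g x * \<phi> x) \<partial>surf \<Omega>))"

definition Hg :: "(real ^ 'n) set \<Rightarrow> (real ^ 'n \<Rightarrow> real ^ 'n) \<Rightarrow> (real ^ 'n \<Rightarrow> real)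
    \<Rightarrow> (real ^ 'n \<Rightarrow> real ^ 'n) set" where
  "Hg \<Omega> \<beta> g = {\<tau>. Hdiv \<Omega> \<tau> \<and> ntrace_inflow \<Omega> \<beta> g \<tau>}"

definition Wspace :: "('a::euclidean_space) set \<Rightarrow> ('a \<Rightarrow> 'a) \<Rightarrow> ('a \<Rightarrow> real) set" where
  "Wspace \<Omega> \<beta> = {v. L2 (lebesgue_on \<Omega>) v \<and> Hdiv \<Omega> (\<lambda>x. v x *\<^sub>R \<beta> x)}"

definition transport_sol :: "(real ^ 'n) set \<Rightarrow> (real ^ 'n \<Rightarrow> real ^ 'n) \<Rightarrow> (real ^ 'n \<Rightarrow> real)
    \<Rightarrow> (real ^ 'n \<Rightarrow> real) \<Rightarrow> (real ^ 'n \<Rightarrow> real) \<Rightarrow> (real ^ 'n \<Rightarrow> real) \<Rightarrow> bool" where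
  "transport_sol \<Omega> \<beta> \<gamma> f g u \<longleftrightarrow> u \<in> Wspace \<Omega> \<beta> \<and>
     (AE x in lebesgue_on \<Omega>. wdiv \<Omega> (\<lambda>y. u y *\<^sub>R \<beta> y) x + \<gamma> x * u x = f x) \<and>
     ntrace_inflow \<Omega> \<beta> g (\<lambda>y. u y *\<^sub>R \<beta> y)"

definition assumption_A :: "(real ^ 'n) set \<Rightarrow> (real ^ 'n \<Rightarrow> real ^ 'n) \<Rightarrow> (real ^ 'n \<Rightarrow> real) \<Rightarrow> bool" where
  "assumption_A \<Omega> \<beta> \<gamma> \<longleftrightarrow>
     (\<forall>f g. L2 (lebesgue_on \<Omega>) f \<and> L2_inflow \<Omega> \<beta> g \<longrightarrow>
        (\<exists>u. transport_sol \<Omega> \<beta> \<gamma> f g u) \<and>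
        (\<forall>u v. transport_sol \<Omega> \<beta> \<gamma> f g u \<and> transport_sol \<Omega> \<beta> \<gamma> f g v \<longrightarrow>
            (AE x in lebesgue_on \<Omega>. u x = v x)))"

definition C1_closure :: "('a::euclidean_space) set \<Rightarrow> ('a \<Rightarrow> 'a) \<Rightarrow> bool" where
  "C1_closure \<Omega> \<beta> \<longleftrightarrow> (\<exists>D :: 'a \<Rightarrow> 'a \<Rightarrow>\<^sub>L 'a.
     (\<forall>x\<in>closure \<Omega>. (\<beta> has_derivative blinfun_apply (D x)) (at x)) \<and>
     continuous_on (closure \<Omega>) D)"

definition J1 :: "(real ^ 'n) set \<Rightarrow> (real ^ 'n \<Rightarrow> real ^ 'n) \<Rightarrow> (real ^ 'n \<Rightarrow> real)
    \<Rightarrow> (nat \<Rightarrow> real ^ 'n \<Rightarrow> real ^ 'n) \<Rightarrow> (real ^ 'n \<Rightarrow> real)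
    \<Rightarrow> (real ^ 'n \<Rightarrow> real ^ 'n) \<Rightarrow> real" where
  "J1 \<Omega> \<beta> \<gamma> bp f \<tau> =
     (\<integral>x. (wdiv \<Omega> \<tau> x + (\<gamma> x / (norm (\<beta> x))\<^sup>2) * (\<beta> x \<bullet> \<tau> x) - f x)\<^sup>2 \<partial>lebesgue_on \<Omega>)
     + (\<Sum>i = 1..CARD('n) - 1. \<integral>x. (\<tau> x \<bullet> bp i x)\<^sup>2 \<partial>lebesgue_on \<Omega>)"

end

theory Submission
  imports Defs
begin

text \<open>The transport solution u of Assumption A yields the flux \<open>u \<beta>\<close>, which satisfies the
inflow condition and makes both terms of J1 vanish, so the infimum is 0 and is attained.
Any other minimiser \<open>\<sigma>\<close> therefore also has J1 = 0: its components orthogonal to \<open>\<beta>\<close>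
vanish, so \<open>\<sigma> = u' \<beta>\<close> with \<open>u' = (\<beta> \<bullet> \<sigma>) / |\<beta>|\<^sup>2\<close>, and the vanishing first term says
that u' solves the transport problem. Uniqueness in Assumption A gives u' = u.\<close>

lemma orthogonal_to_orthonormal_complement_imp_parallel:
  fixes v b :: "'a::euclidean_space" and e :: "nat \<Rightarrow> 'a"
  assumes b: "b \<noteq> 0"
    and b_perp: "\<forall>i\<in>{1..DIM('a) - 1}. b \<bullet> e i = 0"
    and e_on: "\<forall>i\<in>{1..DIM('a) - 1}. \<forall>j\<in>{1..DIM('a) - 1}. e i \<bullet> e j = (if i = j then 1 else 0)"
    and v_perp: "\<forall>i\<in>{1..DIM('a) - 1}. v \<bullet> e i = 0"
  shows "v = ((b \<bullet> v) / (norm b)\<^sup>2) *\<^sub>R b"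
proof -
  define I where "I = {1..DIM('a) - 1}"
  define S where "S = insert b (e ` I)"
  have "inj_on e I"
    by (rule inj_onI) (metis e_on[folded I_def] one_neq_zero)
  moreover have "b \<notin> e ` I" using b_perp b unfolding I_def by auto
  ultimately have card_S: "card S = dim (UNIV :: 'a set)"
    unfolding S_def I_def by (simp add: card_image)
  have "pairwise orthogonal S"
    unfolding S_def pairwise_def orthogonal_def using b_perp e_on unfolding I_def
    by (auto simp: inner_commute)
  moreover have "0 \<notin> S" unfolding S_def using b e_on unfolding I_def by force
  ultimately have "independent S" by (rule pairwise_orthogonal_independent)
  then have span_S: "UNIV \<subseteq> span S"
    using card_eq_dim[of S UNIV] card_S unfolding S_def I_def by simp
  define w where "w = v - ((b \<bullet> v) / (norm b)\<^sup>2) *\<^sub>R b"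
  have "orthogonal w y" if y: "y \<in> S" for y
  proof -
    consider "y = b" | i where "i \<in> I" "y = e i" using y unfolding S_def by auto
    then show ?thesis
    proof cases
      case 1
      then show ?thesis using b unfolding w_def orthogonal_def
        by (simp add: inner_diff_left inner_diff_right power2_norm_eq_inner inner_commute)
    next
      case 2
      then show ?thesis using b_perp v_perp unfolding w_def orthogonal_def I_def
        by (simp add: inner_diff_left)
    qed
  qed
  then have "orthogonal w w" using orthogonal_to_span span_S by blast
  then have "w = 0" by (simp add: orthogonal_def)
  then show ?thesis unfolding w_def by simp
qed

lemma continuous_on_compact_norm_bounded_below:
  fixes \<beta> :: "'a::topological_space \<Rightarrow> 'b::real_normed_vector"
  assumes "compact K" "continuous_on K \<beta>" "\<forall>x\<in>K. norm (\<beta> x) > 0"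
  obtains m where "m > 0" "\<forall>x\<in>K. m \<le> norm (\<beta> x)"
proof (cases "K = {}")
  case False
  have "continuous_on K (\<lambda>x. norm (\<beta> x))" using assms(2) by (intro continuous_intros)
  then obtain x0 where "x0 \<in> K" "\<forall>y\<in>K. norm (\<beta> x0) \<le> norm (\<beta> y)"
    using continuous_attains_inf[OF assms(1) False] by blast
  then show ?thesis using that[of "norm (\<beta> x0)"] assms(3) by blast
next
  case True
  then show ?thesis using that[of 1] by simp
qed

lemma C1_closure_imp_continuous_on:
  assumes "C1_closure \<Omega> \<beta>"
  shows "continuous_on (closure \<Omega>) \<beta>"
proof -
  obtain D where "\<forall>x\<in>closure \<Omega>. (\<beta> has_derivative blinfun_apply (D x)) (at x)"
    using assms unfolding C1_closure_def by blast
  then have "\<forall>x\<in>closure \<Omega>. isCont \<beta> x" using has_derivative_continuous by blast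
  then show ?thesis by (rule continuous_at_imp_continuous_on)
qed

lemma C1_closure_bounded_below_measurable:
  assumes \<Omega>: "\<Omega> \<in> sets lebesgue" "bounded \<Omega>" and \<beta>: "C1_closure \<Omega> \<beta>"
    and pos: "\<forall>x\<in>closure \<Omega>. norm (\<beta> x) > 0"
  obtains m where "m > 0" "\<forall>x\<in>\<Omega>. m \<le> norm (\<beta> x)"
    and "\<beta> \<in> borel_measurable (lebesgue_on \<Omega>)"
proof -
  have cont: "continuous_on (closure \<Omega>) \<beta>" using \<beta> by (rule C1_closure_imp_continuous_on)
  obtain m where "m > 0" "\<forall>x\<in>closure \<Omega>. m \<le> norm (\<beta> x)"
    using continuous_on_compact_norm_bounded_below[OF _ cont pos] \<Omega>(2) compact_closure by blast
  moreover have "\<beta> \<in> borel_measurable (lebesgue_on \<Omega>)"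
    using continuous_on_subset[OF cont closure_subset] \<Omega>(1)
    by (rule continuous_imp_measurable_on_sets_lebesgue)
  ultimately show thesis using that closure_subset by blast
qed

lemma L2_add:
  assumes "L2 M f" "L2 M g"
  shows "L2 M (\<lambda>x. f x + g x)"
  unfolding L2_def
proof (intro conjI)
  have [measurable]: "f \<in> borel_measurable M" "g \<in> borel_measurable M"
    using assms unfolding L2_def by auto
  show "(\<lambda>x. f x + g x) \<in> borel_measurable M" by measurable
  show "integrable M (\<lambda>x. (f x + g x)\<^sup>2)"
  proof (rule Bochner_Integration.integrable_bound)
    show "integrable M (\<lambda>x. 2 * (f x)\<^sup>2 + 2 * (g x)\<^sup>2)"
      using assms unfolding L2_def by auto
    have "(a + b)\<^sup>2 \<le> 2 * a\<^sup>2 + 2 * b\<^sup>2" for a b :: real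
      using sum_squares_bound[of a b] by (simp add: power2_eq_square algebra_simps)
    then show "AE x in M. norm ((f x + g x)\<^sup>2) \<le> norm (2 * (f x)\<^sup>2 + 2 * (g x)\<^sup>2)"
      by simp
  qed measurable
qed

lemma L2_uminus: "L2 M f \<Longrightarrow> L2 M (\<lambda>x. - f x)"
  unfolding L2_def by simp

lemma L2_diff: "L2 M f \<Longrightarrow> L2 M g \<Longrightarrow> L2 M (\<lambda>x. f x - g x)"
  using L2_add[of M f "\<lambda>x. - g x"] L2_uminus[of M g] by simp

lemma L2_inner_bounded:
  fixes \<tau> w :: "'a \<Rightarrow> 'b::euclidean_space"
  assumes \<tau>: "L2v M \<tau>" and w[measurable]: "w \<in> borel_measurable M"
    and bound: "AE x in M. norm (w x) \<le> C"
  shows "L2 M (\<lambda>x. w x \<bullet> \<tau> x)"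
  unfolding L2_def
proof (intro conjI)
  have [measurable]: "\<tau> \<in> borel_measurable M" using \<tau> unfolding L2v_def by simp
  show "(\<lambda>x. w x \<bullet> \<tau> x) \<in> borel_measurable M" by measurable
  show "integrable M (\<lambda>x. (w x \<bullet> \<tau> x)\<^sup>2)"
  proof (rule Bochner_Integration.integrable_bound)
    show "integrable M (\<lambda>x. C\<^sup>2 * (norm (\<tau> x))\<^sup>2)" using \<tau> unfolding L2v_def by simp
    show "AE x in M. norm ((w x \<bullet> \<tau> x)\<^sup>2) \<le> norm (C\<^sup>2 * (norm (\<tau> x))\<^sup>2)"
      using bound
    proof eventually_elim
      case (elim x)
      have "\<bar>w x \<bullet> \<tau> x\<bar> \<le> C * norm (\<tau> x)"
        using Cauchy_Schwarz_ineq2[of "w x" "\<tau> x"] mult_right_mono[OF elim norm_ge_zero[of "\<tau> x"]]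
        by linarith
      then have "\<bar>w x \<bullet> \<tau> x\<bar>\<^sup>2 \<le> (C * norm (\<tau> x))\<^sup>2" by (intro power_mono) auto
      then show ?case by (simp add: power_mult_distrib)
    qed
  qed measurable
qed

lemma L2_mult_bounded:
  assumes "L2 M u" "h \<in> borel_measurable M" "AE x in M. \<bar>h x\<bar> \<le> C"
  shows "L2 M (\<lambda>x. h x * u x)"
  using L2_inner_bounded[of M u h C] assms by (simp add: L2v_def L2_def)

lemma integral_sum_squares_eq_0_imp_AE:
  fixes f :: "'a \<Rightarrow> real" and h :: "'i \<Rightarrow> 'a \<Rightarrow> real"
  assumes f: "integrable M (\<lambda>x. (f x)\<^sup>2)"
    and I: "finite I" and h: "\<forall>i\<in>I. integrable M (\<lambda>x. (h i x)\<^sup>2)"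
    and zero: "(\<integral>x. (f x)\<^sup>2 \<partial>M) + (\<Sum>i\<in>I. \<integral>x. (h i x)\<^sup>2 \<partial>M) = 0"
  shows "AE x in M. f x = 0 \<and> (\<forall>i\<in>I. h i x = 0)"
proof -
  have int_nonneg: "(\<integral>x. (k x)\<^sup>2 \<partial>M) \<ge> 0" for k :: "'a \<Rightarrow> real"
    by (rule integral_nonneg_AE) simp
  have AE_0: "AE x in M. k x = 0"
    if "integrable M (\<lambda>x. (k x)\<^sup>2)" "(\<integral>x. (k x)\<^sup>2 \<partial>M) = 0" for k :: "'a \<Rightarrow> real"
    using integral_nonneg_eq_0_iff_AE[OF that(1)] that(2) by simp
  have "(\<Sum>i\<in>I. \<integral>x. (h i x)\<^sup>2 \<partial>M) \<ge> 0" by (rule sum_nonneg) (rule int_nonneg)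
  then have f0: "(\<integral>x. (f x)\<^sup>2 \<partial>M) = 0" and h0: "(\<Sum>i\<in>I. \<integral>x. (h i x)\<^sup>2 \<partial>M) = 0"
    using zero int_nonneg[of f] by linarith+
  have "AE x in M. h i x = 0" if i: "i \<in> I" for i
  proof (rule AE_0)
    show "integrable M (\<lambda>x. (h i x)\<^sup>2)" using h i by simp
    show "(\<integral>x. (h i x)\<^sup>2 \<partial>M) = 0" by (rule sum_nonneg_0[OF I _ h0 i]) (rule int_nonneg)
  qed
  then have "AE x in M. \<forall>i\<in>I. h i x = 0" by (rule AE_finite_allI[OF I])
  moreover have "AE x in M. f x = 0" using f f0 by (rule AE_0)
  ultimately show ?thesis by eventually_elim simp
qed

subsection \<open>Changing a flux on a null set\<close>

lemma C1c_measurable: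
  assumes "C1c \<phi> d\<phi>" and S: "S \<in> sets lebesgue"
  shows "\<phi> \<in> borel_measurable (lebesgue_on S)" "d\<phi> \<in> borel_measurable (lebesgue_on S)"
proof -
  have "continuous_on S \<phi>"
    using assms(1) unfolding C1c_def
    by (meson continuous_at_imp_continuous_on has_derivative_continuous)
  then show "\<phi> \<in> borel_measurable (lebesgue_on S)"
    using continuous_imp_measurable_on_sets_lebesgue S by blast
  have "continuous_on S d\<phi>" using assms(1) unfolding C1c_def
    using continuous_on_subset by blast
  then show "d\<phi> \<in> borel_measurable (lebesgue_on S)"
    using continuous_imp_measurable_on_sets_lebesgue S by blast
qed

context
  fixes S :: "'a::euclidean_space set" and \<tau>\<^sub>1 \<tau>\<^sub>2 :: "'a \<Rightarrow> 'a"
  assumes S: "S \<in> sets lebesgue"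
    and \<tau>\<^sub>1[measurable]: "\<tau>\<^sub>1 \<in> borel_measurable (lebesgue_on S)"
    and \<tau>\<^sub>2[measurable]: "\<tau>\<^sub>2 \<in> borel_measurable (lebesgue_on S)"
    and AE_eq: "AE x in lebesgue_on S. \<tau>\<^sub>1 x = \<tau>\<^sub>2 x"
begin

lemma has_weak_div_cong_AE: "has_weak_div S \<tau>\<^sub>1 = has_weak_div S \<tau>\<^sub>2"
proof -
  have "(\<integral>x. \<tau>\<^sub>1 x \<bullet> d\<phi> x \<partial>lebesgue_on S) = (\<integral>x. \<tau>\<^sub>2 x \<bullet> d\<phi> x \<partial>lebesgue_on S)"
    if "C1c \<phi> d\<phi>" for \<phi> d\<phi>
  proof -
    note [measurable] = C1c_measurable[OF that S]
    show ?thesis by (rule integral_cong_AE) (use AE_eq in auto)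
  qed
  then show ?thesis unfolding has_weak_div_def by (intro ext) (metis (no_types, lifting))
qed

lemma wdiv_cong_AE: "wdiv S \<tau>\<^sub>1 = wdiv S \<tau>\<^sub>2"
  unfolding wdiv_def has_weak_div_cong_AE ..

lemma Hdiv_cong_AE: "Hdiv S \<tau>\<^sub>1 = Hdiv S \<tau>\<^sub>2"
proof -
  have "integrable (lebesgue_on S) (\<lambda>x. (norm (\<tau>\<^sub>1 x))\<^sup>2) =
        integrable (lebesgue_on S) (\<lambda>x. (norm (\<tau>\<^sub>2 x))\<^sup>2)"
    by (rule integrable_cong_AE) (use AE_eq in auto)
  then show ?thesis unfolding Hdiv_def L2v_def has_weak_div_cong_AE by simp
qed

end

lemma L2_wdiv:
  assumes "Hdiv \<Omega> \<tau>"
  shows "L2 (lebesgue_on \<Omega>) (wdiv \<Omega> \<tau>)"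
  using assms someI_ex[of "\<lambda>w. L2 (lebesgue_on \<Omega>) w \<and> has_weak_div \<Omega> \<tau> w"]
  unfolding Hdiv_def wdiv_def by blast

lemma Hg_cong_AE:
  fixes \<tau>\<^sub>1 \<tau>\<^sub>2 :: "real ^ 'n \<Rightarrow> real ^ 'n"
  assumes S: "S \<in> sets lebesgue" and \<tau>\<^sub>1: "\<tau>\<^sub>1 \<in> Hg S \<beta> g"
    and \<tau>\<^sub>2[measurable]: "\<tau>\<^sub>2 \<in> borel_measurable (lebesgue_on S)"
    and AE_eq: "AE x in lebesgue_on S. \<tau>\<^sub>1 x = \<tau>\<^sub>2 x"
  shows "\<tau>\<^sub>2 \<in> Hg S \<beta> g"
proof -
  have Hdiv: "Hdiv S \<tau>\<^sub>1" and trace: "ntrace_inflow S \<beta> g \<tau>\<^sub>1"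
    using \<tau>\<^sub>1 unfolding Hg_def by auto
  have \<tau>\<^sub>1_meas[measurable]: "\<tau>\<^sub>1 \<in> borel_measurable (lebesgue_on S)"
    using Hdiv unfolding Hdiv_def L2v_def by simp
  have [measurable]: "wdiv S \<tau>\<^sub>1 \<in> borel_measurable (lebesgue_on S)"
    using L2_wdiv[OF Hdiv] unfolding L2_def by simp
  have wdiv_eq: "wdiv S \<tau>\<^sub>2 = wdiv S \<tau>\<^sub>1"
    using wdiv_cong_AE[OF S \<tau>\<^sub>1_meas \<tau>\<^sub>2 AE_eq] by simp
  have "(\<integral>x. wdiv S \<tau>\<^sub>1 x * \<phi> x + \<tau>\<^sub>1 x \<bullet> d\<phi> x \<partial>lebesgue_on S) =
        (\<integral>x. wdiv S \<tau>\<^sub>2 x * \<phi> x + \<tau>\<^sub>2 x \<bullet> d\<phi> x \<partial>lebesgue_on S)"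
    if "C1c \<phi> d\<phi>" for \<phi> d\<phi>
  proof -
    note [measurable] = C1c_measurable[OF that S]
    show ?thesis unfolding wdiv_eq
      by (rule integral_cong_AE) (use AE_eq in auto)
  qed
  then have "ntrace_inflow S \<beta> g \<tau>\<^sub>2" using trace unfolding ntrace_inflow_def by simp
  moreover have "Hdiv S \<tau>\<^sub>2" using Hdiv Hdiv_cong_AE[OF S \<tau>\<^sub>1_meas \<tau>\<^sub>2 AE_eq] by simp
  ultimately show ?thesis unfolding Hg_def by simp
qed

lemma J1_nonneg: "J1 \<Omega> \<beta> \<gamma> bp f \<tau> \<ge> 0"
  unfolding J1_def by (intro add_nonneg_nonneg sum_nonneg integral_nonneg_AE) auto

lemma transport_flux_in_Hg:
  "transport_sol \<Omega> \<beta> \<gamma> f g u \<Longrightarrow> (\<lambda>x. u x *\<^sub>R \<beta> x) \<in> Hg \<Omega> \<beta> g"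
  unfolding Hg_def transport_sol_def Wspace_def by auto

lemma J1_transport_flux_eq_0:
  fixes \<Omega> :: "(real ^ 'n) set"
  assumes \<beta>: "\<forall>x\<in>\<Omega>. \<beta> x \<noteq> 0"
    and bp_perp: "\<forall>i\<in>{1..CARD('n) - 1}. \<forall>x\<in>\<Omega>. \<beta> x \<bullet> bp i x = 0"
    and u: "transport_sol \<Omega> \<beta> \<gamma> f g u"
  shows "J1 \<Omega> \<beta> \<gamma> bp f (\<lambda>x. u x *\<^sub>R \<beta> x) = 0"
proof -
  define \<sigma> where "\<sigma> = (\<lambda>x. u x *\<^sub>R \<beta> x)"
  have "AE x in lebesgue_on \<Omega>. wdiv \<Omega> \<sigma> x + \<gamma> x * u x = f x"
    using u unfolding transport_sol_def \<sigma>_def by auto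
  then have "AE x in lebesgue_on \<Omega>.
      (wdiv \<Omega> \<sigma> x + (\<gamma> x / (norm (\<beta> x))\<^sup>2) * (\<beta> x \<bullet> \<sigma> x) - f x)\<^sup>2 = 0"
  proof (rule AE_mp, intro AE_I2 impI)
    fix x assume "x \<in> space (lebesgue_on \<Omega>)" "wdiv \<Omega> \<sigma> x + \<gamma> x * u x = f x"
    then show "(wdiv \<Omega> \<sigma> x + (\<gamma> x / (norm (\<beta> x))\<^sup>2) * (\<beta> x \<bullet> \<sigma> x) - f x)\<^sup>2 = 0"
      using \<beta> unfolding \<sigma>_def by (simp add: power2_norm_eq_inner)
  qed
  then have "(\<integral>x. (wdiv \<Omega> \<sigma> x + (\<gamma> x / (norm (\<beta> x))\<^sup>2) * (\<beta> x \<bullet> \<sigma> x) - f x)\<^sup>2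
      \<partial>lebesgue_on \<Omega>) = 0"
    by (rule integral_eq_zero_AE)
  moreover have "(\<integral>x. (\<sigma> x \<bullet> bp i x)\<^sup>2 \<partial>lebesgue_on \<Omega>) = 0" if "i \<in> {1..CARD('n) - 1}" for i
    by (rule integral_eq_zero_AE) (use bp_perp that in \<open>auto simp: \<sigma>_def inner_commute\<close>)
  ultimately show ?thesis unfolding J1_def \<sigma>_def by simp
qed

lemma L2_projection_coefficient:
  fixes \<sigma> \<beta> :: "'a \<Rightarrow> 'b::euclidean_space"
  assumes \<sigma>: "L2v M \<sigma>" and \<beta>: "\<beta> \<in> borel_measurable M"
    and m: "m > 0" "\<forall>x\<in>space M. m \<le> norm (\<beta> x)"
  shows "L2 M (\<lambda>x. (\<beta> x \<bullet> \<sigma> x) / (norm (\<beta> x))\<^sup>2)"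
proof -
  have "norm (inverse ((norm (\<beta> x))\<^sup>2) *\<^sub>R \<beta> x) \<le> inverse m" if "x \<in> space M" for x
  proof -
    have "norm (\<beta> x) > 0" using m that by fastforce
    then have "norm (inverse ((norm (\<beta> x))\<^sup>2) *\<^sub>R \<beta> x) = inverse (norm (\<beta> x))"
      by (simp add: power2_eq_square)
    then show ?thesis using m that by (simp add: le_imp_inverse_le)
  qed
  then have "L2 M (\<lambda>x. (inverse ((norm (\<beta> x))\<^sup>2) *\<^sub>R \<beta> x) \<bullet> \<sigma> x)"
    using \<beta> by (intro L2_inner_bounded[OF \<sigma>]) (auto intro!: AE_I2)
  then show ?thesis by (simp add: field_simps)
qed

lemma J1_eq_0_imp_AE:
  fixes \<sigma> :: "real ^ 'n \<Rightarrow> real ^ 'n"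
  assumes \<beta>[measurable]: "\<beta> \<in> borel_measurable (lebesgue_on \<Omega>)"
    and m: "m > 0" "\<forall>x\<in>\<Omega>. m \<le> norm (\<beta> x)"
    and \<gamma>: "Linf (lebesgue_on \<Omega>) \<gamma>" and f: "L2 (lebesgue_on \<Omega>) f"
    and bp_meas: "\<forall>i\<in>{1..CARD('n) - 1}. bp i \<in> borel_measurable (lebesgue_on \<Omega>)"
    and bp_unit: "\<forall>i\<in>{1..CARD('n) - 1}. \<forall>x\<in>\<Omega>. norm (bp i x) = 1"
    and \<sigma>: "\<sigma> \<in> Hg \<Omega> \<beta> g" and J1_0: "J1 \<Omega> \<beta> \<gamma> bp f \<sigma> = 0"
  shows "AE x in lebesgue_on \<Omega>.
           wdiv \<Omega> \<sigma> x + \<gamma> x * ((\<beta> x \<bullet> \<sigma> x) / (norm (\<beta> x))\<^sup>2) - f x = 0 \<and>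
           (\<forall>i\<in>{1..CARD('n) - 1}. \<sigma> x \<bullet> bp i x = 0)"
proof -
  let ?M = "lebesgue_on \<Omega>"
  define I where "I = {1..CARD('n) - 1}"
  define r where "r x = wdiv \<Omega> \<sigma> x + \<gamma> x * ((\<beta> x \<bullet> \<sigma> x) / (norm (\<beta> x))\<^sup>2) - f x" for x
  have L2v_\<sigma>: "L2v ?M \<sigma>" using \<sigma> unfolding Hg_def Hdiv_def by simp
  obtain C where C: "AE x in ?M. \<bar>\<gamma> x\<bar> \<le> C" using \<gamma> unfolding Linf_def by blast
  have "L2 ?M r"
    unfolding r_def using \<sigma> f C \<gamma> L2_projection_coefficient[OF L2v_\<sigma> \<beta>] m
    by (intro L2_diff L2_add L2_mult_bounded L2_wdiv) (auto simp: Hg_def Linf_def)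
  moreover have "L2 ?M (\<lambda>x. \<sigma> x \<bullet> bp i x)" if "i \<in> I" for i
  proof -
    have "AE x in ?M. norm (bp i x) \<le> 1" using bp_unit that unfolding I_def by (intro AE_I2) simp
    then show ?thesis
      using L2_inner_bounded[OF L2v_\<sigma>, of "bp i" 1] bp_meas that unfolding I_def
      by (simp add: inner_commute)
  qed
  moreover have "(\<integral>x. (r x)\<^sup>2 \<partial>?M) + (\<Sum>i\<in>I. \<integral>x. (\<sigma> x \<bullet> bp i x)\<^sup>2 \<partial>?M) = 0"
    using J1_0 unfolding J1_def r_def I_def by (simp add: mult.assoc)
  ultimately show ?thesis
    using integral_sum_squares_eq_0_imp_AE[of ?M r I "\<lambda>i x. \<sigma> x \<bullet> bp i x"]
    unfolding L2_def I_def r_def by simp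
qed

lemma J1_eq_0_imp_transport_flux:
  fixes \<sigma> :: "real ^ 'n \<Rightarrow> real ^ 'n"
  assumes \<Omega>: "\<Omega> \<in> sets lebesgue"
    and \<beta>[measurable]: "\<beta> \<in> borel_measurable (lebesgue_on \<Omega>)"
    and m: "m > 0" "\<forall>x\<in>\<Omega>. m \<le> norm (\<beta> x)"
    and \<gamma>: "Linf (lebesgue_on \<Omega>) \<gamma>" and f: "L2 (lebesgue_on \<Omega>) f"
    and bp_meas: "\<forall>i\<in>{1..CARD('n) - 1}. bp i \<in> borel_measurable (lebesgue_on \<Omega>)"
    and bp_perp: "\<forall>i\<in>{1..CARD('n) - 1}. \<forall>x\<in>\<Omega>. \<beta> x \<bullet> bp i x = 0"
    and bp_on: "\<forall>i\<in>{1..CARD('n) - 1}. \<forall>j\<in>{1..CARD('n) - 1}. \<forall>x\<in>\<Omega>.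
                  bp i x \<bullet> bp j x = (if i = j then 1 else 0)"
    and \<sigma>: "\<sigma> \<in> Hg \<Omega> \<beta> g" and J1_0: "J1 \<Omega> \<beta> \<gamma> bp f \<sigma> = 0"
  obtains u where "transport_sol \<Omega> \<beta> \<gamma> f g u"
    and "AE x in lebesgue_on \<Omega>. \<sigma> x = u x *\<^sub>R \<beta> x"
proof -
  let ?M = "lebesgue_on \<Omega>"
  define u where "u x = (\<beta> x \<bullet> \<sigma> x) / (norm (\<beta> x))\<^sup>2" for x
  have L2_u: "L2 ?M u"
    unfolding u_def using \<sigma> m by (intro L2_projection_coefficient) (auto simp: Hg_def Hdiv_def)
  have "\<forall>i\<in>{1..CARD('n) - 1}. \<forall>x\<in>\<Omega>. norm (bp i x) = 1"
    using bp_on by (auto simp: norm_eq_1)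
  then have AE_0: "AE x in ?M. wdiv \<Omega> \<sigma> x + \<gamma> x * u x - f x = 0 \<and>
      (\<forall>i\<in>{1..CARD('n) - 1}. \<sigma> x \<bullet> bp i x = 0)"
    unfolding u_def using J1_eq_0_imp_AE[OF \<beta> m \<gamma> f bp_meas _ \<sigma> J1_0] by simp
  then have AE_parallel: "AE x in ?M. \<sigma> x = u x *\<^sub>R \<beta> x"
  proof (rule AE_mp, intro AE_I2 impI)
    fix x assume "x \<in> space ?M" and "wdiv \<Omega> \<sigma> x + \<gamma> x * u x - f x = 0 \<and>
      (\<forall>i\<in>{1..CARD('n) - 1}. \<sigma> x \<bullet> bp i x = 0)"
    then have x: "x \<in> \<Omega>" and perp: "\<forall>i\<in>{1..DIM(real ^ 'n) - 1}. \<sigma> x \<bullet> bp i x = 0"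
      by simp_all
    have "\<beta> x \<noteq> 0" using m x by fastforce
    moreover have "\<forall>i\<in>{1..DIM(real ^ 'n) - 1}. \<beta> x \<bullet> bp i x = 0" using bp_perp x by simp
    moreover have "\<forall>i\<in>{1..DIM(real ^ 'n) - 1}. \<forall>j\<in>{1..DIM(real ^ 'n) - 1}.
        bp i x \<bullet> bp j x = (if i = j then 1 else 0)" using bp_on x by simp
    ultimately show "\<sigma> x = u x *\<^sub>R \<beta> x"
      unfolding u_def using perp by (rule orthogonal_to_orthonormal_complement_imp_parallel)
  qed
  have \<sigma>_meas: "\<sigma> \<in> borel_measurable ?M" using \<sigma> by (simp add: Hg_def Hdiv_def L2v_def)
  have [measurable]: "u \<in> borel_measurable ?M" using L2_u unfolding L2_def by simp
  have flux_meas: "(\<lambda>x. u x *\<^sub>R \<beta> x) \<in> borel_measurable ?M" by measurable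
  have flux_Hg: "(\<lambda>x. u x *\<^sub>R \<beta> x) \<in> Hg \<Omega> \<beta> g"
    using Hg_cong_AE[OF \<Omega> \<sigma> flux_meas AE_parallel] .
  have wdiv_flux: "wdiv \<Omega> (\<lambda>x. u x *\<^sub>R \<beta> x) = wdiv \<Omega> \<sigma>"
    using wdiv_cong_AE[OF \<Omega> \<sigma>_meas flux_meas AE_parallel] by simp
  from AE_0 have "AE x in ?M. wdiv \<Omega> (\<lambda>y. u y *\<^sub>R \<beta> y) x + \<gamma> x * u x = f x"
    by eventually_elim (simp add: wdiv_flux)
  with flux_Hg L2_u have "transport_sol \<Omega> \<beta> \<gamma> f g u"
    unfolding transport_sol_def Wspace_def Hg_def by simp
  then show thesis using AE_parallel by (rule that)
qed

theorem theorem3p2: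
  fixes \<Omega> :: "(real ^ 'n) set"
    and \<beta> :: "real ^ 'n \<Rightarrow> real ^ 'n"
    and \<gamma> f g :: "real ^ 'n \<Rightarrow> real"
    and bp :: "nat \<Rightarrow> real ^ 'n \<Rightarrow> real ^ 'n"
  assumes dim: "CARD('n) = 2 \<or> CARD('n) = 3"
    and dom: "polyhedral_lipschitz_domain \<Omega>"
    and gam: "Linf (lebesgue_on \<Omega>) \<gamma>"
    and bet: "C1_closure \<Omega> \<beta>"
    and bet_pos: "\<forall>x\<in>closure \<Omega>. norm (\<beta> x) > 0"
    and bp_meas: "\<forall>i\<in>{1..CARD('n) - 1}. bp i \<in> borel_measurable (lebesgue_on \<Omega>)"
    and bp_perp: "\<forall>i\<in>{1..CARD('n) - 1}. \<forall>x\<in>\<Omega>. \<beta> x \<bullet> bp i x = 0"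
    and bp_on: "\<forall>i\<in>{1..CARD('n) - 1}. \<forall>j\<in>{1..CARD('n) - 1}. \<forall>x\<in>\<Omega>.
                  bp i x \<bullet> bp j x = (if i = j then 1 else 0)"
    and A: "assumption_A \<Omega> \<beta> \<gamma>"
    and f: "L2 (lebesgue_on \<Omega>) f"
    and g: "L2_inflow \<Omega> \<beta> g"
  shows "\<exists>\<sigma>. \<sigma> \<in> Hg \<Omega> \<beta> g \<and> (\<forall>\<tau>\<in>Hg \<Omega> \<beta> g. J1 \<Omega> \<beta> \<gamma> bp f \<sigma> \<le> J1 \<Omega> \<beta> \<gamma> bp f \<tau>) \<and>
           (\<forall>\<sigma>'. \<sigma>' \<in> Hg \<Omega> \<beta> g \<and> (\<forall>\<tau>\<in>Hg \<Omega> \<beta> g. J1 \<Omega> \<beta> \<gamma> bp f \<sigma>' \<le> J1 \<Omega> \<beta> \<gamma> bp f \<tau>)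
              \<longrightarrow> (AE x in lebesgue_on \<Omega>. \<sigma>' x = \<sigma> x))"
proof -
  have \<Omega>: "\<Omega> \<in> sets lebesgue" "bounded \<Omega>"
    using dom unfolding polyhedral_lipschitz_domain_def by auto
  obtain m where m: "m > 0" "\<forall>x\<in>\<Omega>. m \<le> norm (\<beta> x)"
    and \<beta>_meas: "\<beta> \<in> borel_measurable (lebesgue_on \<Omega>)"
    using C1_closure_bounded_below_measurable[OF \<Omega> bet bet_pos] by blast
  obtain u where u: "transport_sol \<Omega> \<beta> \<gamma> f g u"
    and u_unique: "\<And>v. transport_sol \<Omega> \<beta> \<gamma> f g v \<Longrightarrow> AE x in lebesgue_on \<Omega>. v x = u x"
    using A f g unfolding assumption_A_def by blast
  define \<sigma> where "\<sigma> x = u x *\<^sub>R \<beta> x" for x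
  have \<sigma>_Hg: "\<sigma> \<in> Hg \<Omega> \<beta> g" unfolding \<sigma>_def using u by (rule transport_flux_in_Hg)
  have J1_\<sigma>: "J1 \<Omega> \<beta> \<gamma> bp f \<sigma> = 0"
    unfolding \<sigma>_def using m bp_perp u by (intro J1_transport_flux_eq_0) auto
  have "AE x in lebesgue_on \<Omega>. \<sigma>' x = \<sigma> x"
    if \<sigma>': "\<sigma>' \<in> Hg \<Omega> \<beta> g" and min: "\<forall>\<tau>\<in>Hg \<Omega> \<beta> g. J1 \<Omega> \<beta> \<gamma> bp f \<sigma>' \<le> J1 \<Omega> \<beta> \<gamma> bp f \<tau>"
    for \<sigma>'
  proof -
    have "J1 \<Omega> \<beta> \<gamma> bp f \<sigma>' = 0"
      using min \<sigma>_Hg J1_\<sigma> J1_nonneg[of \<Omega> \<beta> \<gamma> bp f \<sigma>'] by fastforce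
    then obtain v where v: "transport_sol \<Omega> \<beta> \<gamma> f g v"
      and \<sigma>'_eq: "AE x in lebesgue_on \<Omega>. \<sigma>' x = v x *\<^sub>R \<beta> x"
      using J1_eq_0_imp_transport_flux[OF \<Omega>(1) \<beta>_meas m gam f bp_meas bp_perp bp_on \<sigma>'] by blast
    from \<sigma>'_eq u_unique[OF v] show ?thesis by eventually_elim (simp add: \<sigma>_def)
  qed
  moreover have "\<forall>\<tau>\<in>Hg \<Omega> \<beta> g. J1 \<Omega> \<beta> \<gamma> bp f \<sigma> \<le> J1 \<Omega> \<beta> \<gamma> bp f \<tau>"
    by (simp add: J1_\<sigma> J1_nonneg)
  ultimately show ?thesis using \<sigma>_Hg by blast
qed

end
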